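(* Every IC and IR mechanism that is not floor-randomized is dominated by a floor-randomized mechanism.
   Context: Setting. Let $\Theta=[\underline\theta,\overline\theta]$ with $0<\underline\theta<\overline\theta$. Let $c>0$ and let $P:\mathbb R_+\to\mathbb R_+$ be continuous and strictly decreasing with $P(\overline q)=0$ for some $\overline q>0$. Put $V(q)=\int_0^q P(z)\,dz$ and $\mathrm{TS}(\theta,q)=V(q)-c-\theta q$ for $q>0$, $\mathrm{TS}(\theta,0)=0$. Assume (A2): $\mathrm{TS}(\overline\theta,P^{-1}(\overline\theta))>0$. A mechanism is a triple $M=(r,q,u)$ of functions $r:\Theta\to[0,1]$, $q:\Theta\to[0,\overline q]$, $u:\Theta\to\mathbb R$ with $q(\theta)=0$ if and only if $r(\theta)=0$. It is IC if $u(\theta)\ge u(\theta')+(\theta'-\theta)q(\theta')r(\theta')$ for all $\theta,\theta'\in\Theta$, and IR if $u(\theta)\ge 0$ for all $\theta$. (Known fact: $M$ is IC iff $\theta\mapsto q(\theta)r(\theta)$ is nonincreasing and $u(\theta)=u(\overline\theta)+\int_\theta^{\overline\theta}q(z)r(z)\,dz$ for all $\theta$; an IC mechanism is IR iff $u(\overline\theta)\ge0$.) Fix $\alpha\in[0,1)$. The regulator's surplus at $\theta$ is $\mathrm{RS}_\alpha(\theta,M)=r(\theta)\,\mathrm{TS}(\theta,q(\theta))-(1-\alpha)u(\theta)$. An IC and IR mechanism $\tilde M$ dominates an IC and IR mechanism $M$ if $\mathrm{RS}_\alpha(\theta,\tilde M)\ge \mathrm{RS}_\alpha(\theta,M)$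 for all $\theta\in\Theta$ with strict inequality for some $\theta$; $M$ is undominated if it is IC, IR and not dominated by any IC and IR mechanism. The quantity floor $\hat q$ is the unique $q>0$ with $V(q)-qP(q)=c$. A mechanism $(r,q,u)$ is floor-randomized if it is IC, IR, $u(\overline\theta)=0$, and $\Theta$ can be partitioned into three pairwise disjoint (possibly empty) intervals $\Theta_1,\Theta_{01},\Theta_0$, with every element of $\Theta_0$ larger than every element of $\Theta_{01}$ and every element of $\Theta_{01}$ larger than every element of $\Theta_1$, such that: $q(\theta)\ge\hat q$ and $r(\theta)=1$ for $\theta\in\Theta_1$; $q(\theta)=\hat q$ and $r(\theta)\in(0,1)$ for $\theta\in\Theta_{01}$; $q(\theta)=r(\theta)=0$ for $\theta\in\Theta_0$. *)

theory Defs
  imports "HOL-Analysis.Analysis"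
begin

text \<open>A mechanism is a triple (r, q, u) of real functions; only their values on
  the type space Theta = {tlo..thi} matter.\<close>
type_synonym mech = "(real \<Rightarrow> real) \<times> (real \<Rightarrow> real) \<times> (real \<Rightarrow> real)"

definition V :: "(real \<Rightarrow> real) \<Rightarrow> real \<Rightarrow> real" where
  "V P q = integral {0..q} P"

definition TS :: "(real \<Rightarrow> real) \<Rightarrow> real \<Rightarrow> real \<Rightarrow> real \<Rightarrow> real" where
  "TS P c \<theta> q = (if q = 0 then 0 else V P q - c - \<theta> * q)"

definition is_mechanism :: "real \<Rightarrow> real \<Rightarrow> real \<Rightarrow> mech \<Rightarrow> bool" where
  "is_mechanism tlo thi qbar M = (case M of (r, q, u) \<Rightarrow>
     (\<forall>\<theta>\<in>{tlo..thi}. 0 \<le> r \<theta> \<and> r \<theta> \<le> 1 \<and> 0 \<le> q \<theta> \<and> q \<theta> \<le> qbar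
        \<and> (q \<theta> = 0 \<longleftrightarrow> r \<theta> = 0)))"

definition IC :: "real \<Rightarrow> real \<Rightarrow> mech \<Rightarrow> bool" where
  "IC tlo thi M = (case M of (r, q, u) \<Rightarrow>
     (\<forall>\<theta>\<in>{tlo..thi}. \<forall>\<theta>'\<in>{tlo..thi}. u \<theta> \<ge> u \<theta>' + (\<theta>' - \<theta>) * q \<theta>' * r \<theta>'))"

definition IR :: "real \<Rightarrow> real \<Rightarrow> mech \<Rightarrow> bool" where
  "IR tlo thi M = (case M of (r, q, u) \<Rightarrow> (\<forall>\<theta>\<in>{tlo..thi}. u \<theta> \<ge> 0))"

definition IC_IR :: "real \<Rightarrow> real \<Rightarrow> real \<Rightarrow> mech \<Rightarrow> bool" where
  "IC_IR tlo thi qbar M = (is_mechanism tlo thi qbar M \<and> IC tlo thi M \<and> IR tlo thi M)"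

definition RS :: "(real \<Rightarrow> real) \<Rightarrow> real \<Rightarrow> real \<Rightarrow> real \<Rightarrow> mech \<Rightarrow> real" where
  "RS P c \<alpha> \<theta> M = (case M of (r, q, u) \<Rightarrow> r \<theta> * TS P c \<theta> (q \<theta>) - (1 - \<alpha>) * u \<theta>)"

definition dominates :: "(real \<Rightarrow> real) \<Rightarrow> real \<Rightarrow> real \<Rightarrow> real \<Rightarrow> real \<Rightarrow> real \<Rightarrow> mech \<Rightarrow> mech \<Rightarrow> bool" where
  "dominates P c \<alpha> tlo thi qbar M' M =
     (IC_IR tlo thi qbar M' \<and> IC_IR tlo thi qbar M \<and>
      (\<forall>\<theta>\<in>{tlo..thi}. RS P c \<alpha> \<theta> M' \<ge> RS P c \<alpha> \<theta> M) \<and>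
      (\<exists>\<theta>\<in>{tlo..thi}. RS P c \<alpha> \<theta> M' > RS P c \<alpha> \<theta> M))"

definition qfloor :: "(real \<Rightarrow> real) \<Rightarrow> real \<Rightarrow> real" where
  "qfloor P c = (THE q. q > 0 \<and> V P q - q * P q = c)"

definition floor_randomized :: "(real \<Rightarrow> real) \<Rightarrow> real \<Rightarrow> real \<Rightarrow> real \<Rightarrow> real \<Rightarrow> mech \<Rightarrow> bool" where
  "floor_randomized P c tlo thi qbar M = (case M of (r, q, u) \<Rightarrow>
     IC_IR tlo thi qbar M \<and> u thi = 0 \<and>
     (\<exists>T1 T01 T0. is_interval T1 \<and> is_interval T01 \<and> is_interval T0 \<and>
        T1 \<inter> T01 = {} \<and> T1 \<inter> T0 = {} \<and> T01 \<inter> T0 = {} \<and>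
        T1 \<union> T01 \<union> T0 = {tlo..thi} \<and>
        (\<forall>x\<in>T0. \<forall>y\<in>T01. y < x) \<and> (\<forall>x\<in>T01. \<forall>y\<in>T1. y < x) \<and>
        (\<forall>x\<in>T0. \<forall>y\<in>T1. y < x) \<and>
        (\<forall>\<theta>\<in>T1. q \<theta> \<ge> qfloor P c \<and> r \<theta> = 1) \<and>
        (\<forall>\<theta>\<in>T01. q \<theta> = qfloor P c \<and> 0 < r \<theta> \<and> r \<theta> < 1) \<and>
        (\<forall>\<theta>\<in>T0. q \<theta> = 0 \<and> r \<theta> = 0)))"

end

theory Submission
  imports Defs
begin

text \<open>Only the expected quantity x = q r enters the incentive constraints, and IC forces it
  to be nonincreasing. At a type \<theta> with x > 0 the surplus r TS(\<theta>, q) equals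
  x ((V(q) - c)/q - \<theta>), and the average value (V(q) - c)/q is single-peaked with its peak at
  the quantity floor, where its derivative (c - V(q) + q P(q))/q^2 vanishes. As q \<ge> x, the
  surplus is maximized by q' = max qfloor x and r' = x/q'; this keeps x and hence IC, and
  lowering u by u(thi) keeps IR while raising RS by (1 - \<alpha>) u(thi) \<ge> 0. If no type gains
  strictly, then u(thi) = 0 and already q = max qfloor x wherever x > 0, which makes the
  original mechanism floor-randomized.\<close>

definition unit_surplus :: "(real \<Rightarrow> real) \<Rightarrow> real \<Rightarrow> real \<Rightarrow> real" where
  "unit_surplus P c q = (V P q - c) / q"

lemma TS_eq_unit_surplus: "q \<noteq> 0 \<Longrightarrow> TS P c \<theta> q = q * (unit_surplus P c q - \<theta>)"
  unfolding TS_def unit_surplus_def by (simp add: field_simps)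

locale demand =
  fixes P :: "real \<Rightarrow> real"
  assumes continuous_P: "continuous_on {0..} P"
    and P_strict_decreasing: "\<And>x y. 0 \<le> x \<Longrightarrow> x < y \<Longrightarrow> P y < P x"
begin

lemma integrable_P: "0 \<le> a \<Longrightarrow> P integrable_on {a..b}"
  by (rule integrable_continuous_interval, rule continuous_on_subset[OF continuous_P]) auto

lemma V_diff:
  assumes "0 \<le> a" "a \<le> b"
  shows "V P b - V P a = integral {a..b} P"
  using Henstock_Kurzweil_Integration.integral_combine[OF assms integrable_P[OF order_refl]]
  unfolding V_def by simp

lemma continuous_on_V: "continuous_on {0..b} (V P)"
  unfolding V_def using indefinite_integral_continuous_1[OF integrable_P[OF order_refl]] by simp

lemma V_diff_bounds:
  assumes "0 \<le> a" "a < b"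
  shows "(b - a) * P b < V P b - V P a" "V P b - V P a < (b - a) * P a"
proof -
  have cont: "continuous_on {a..b} P"
    by (rule continuous_on_subset[OF continuous_P]) (use assms in auto)
  have ne: "{a<..<b} \<noteq> {}" using assms by auto
  have "integral {a..b} (\<lambda>_. P b) < integral {a..b} P"
    by (rule integral_less_real[OF continuous_on_const cont ne])
      (use P_strict_decreasing assms in auto)
  moreover have "integral {a..b} P < integral {a..b} (\<lambda>_. P a)"
    by (rule integral_less_real[OF cont continuous_on_const ne])
      (use P_strict_decreasing assms in auto)
  ultimately show "(b - a) * P b < V P b - V P a" "V P b - V P a < (b - a) * P a"
    using V_diff[of a b] assms by (simp_all add: mult.commute)
qed

lemma consumer_surplus_strict_mono:
  assumes "0 \<le> a" "a < b"
  shows "V P a - a * P a < V P b - b * P b"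
proof -
  have "a * P b \<le> a * P a"
    using P_strict_decreasing[OF assms] assms(1) by (intro mult_left_mono) auto
  with V_diff_bounds(1)[OF assms] show ?thesis by (simp add: algebra_simps)
qed

lemma P_less_imp_less:
  assumes "0 \<le> b" "P b < P a"
  shows "a < b"
  using P_strict_decreasing[of b a] assms by (cases a b rule: linorder_cases) auto

lemma qfloor_eqI:
  assumes "0 < f" "V P f - f * P f = c"
  shows "qfloor P c = f"
  unfolding qfloor_def
proof (rule the_equality)
  show "0 < f \<and> V P f - f * P f = c" using assms by simp
  show "g = f" if "0 < g \<and> V P g - g * P g = c" for g
    using that assms consumer_surplus_strict_mono[of g f] consumer_surplus_strict_mono[of f g]
    by (cases g f rule: linorder_cases) auto
qed

lemma qfloor_exists:
  assumes "0 < c" "0 \<le> q" "c < V P q - q * P q"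
  shows "0 < qfloor P c" "qfloor P c < q" "V P (qfloor P c) - qfloor P c * P (qfloor P c) = c"
proof -
  have "continuous_on {0..q} (\<lambda>z. V P z - z * P z)"
    by (intro continuous_intros continuous_on_V continuous_on_subset[OF continuous_P]) auto
  then obtain f where f: "0 \<le> f" "f \<le> q" "V P f - f * P f = c"
    using IVT'[of "\<lambda>z. V P z - z * P z" 0 c q] assms by (auto simp: V_def)
  have "f \<noteq> 0" using f(3) assms(1) by (auto simp: V_def)
  with f have "0 < f" by simp
  moreover have "f \<noteq> q" using f(3) assms(3) by auto
  ultimately show "0 < qfloor P c" "qfloor P c < q"
      "V P (qfloor P c) - qfloor P c * P (qfloor P c) = c"
    using qfloor_eqI[of f c] f by auto
qed

lemma unit_surplus_strict_decreasing:
  assumes "c \<le> V P a - a * P a" "0 < a" "a < b"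
  shows "unit_surplus P c b < unit_surplus P c a"
proof -
  have "V P b - V P a < (b - a) * P a" using V_diff_bounds(2)[of a b] assms by simp
  then have "a * (V P b - V P a) < a * ((b - a) * P a)" using assms by simp
  then have "0 < b * (V P a - c) - a * (V P b - c)"
    using mult_nonneg_nonneg[of "b - a" "V P a - a * P a - c"] assms
    by (simp add: algebra_simps)
  with assms show ?thesis unfolding unit_surplus_def by (simp add: field_simps)
qed

lemma unit_surplus_less_floor:
  assumes "V P f - f * P f = c" "0 < q" "q < f"
  shows "unit_surplus P c q < unit_surplus P c f"
proof -
  have "(f - q) * P f < V P f - V P q" using V_diff_bounds(1)[of q f] assms by simp
  then have "f * ((f - q) * P f) < f * (V P f - V P q)" using assms by simp
  then have "0 < q * (V P f - c) - f * (V P q - c) + (f - q) * (V P f - f * P f - c)"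
    by (simp add: algebra_simps)
  then have "0 < q * (V P f - c) - f * (V P q - c)" using assms(1) by simp
  moreover have "0 < f" using assms by simp
  ultimately show ?thesis using assms(2) unfolding unit_surplus_def by (simp add: field_simps)
qed

lemma unit_surplus_less_max_floor:
  assumes f: "V P f - f * P f = c" "0 < f" and "0 < x" "x \<le> q" "q \<noteq> max f x"
  shows "unit_surplus P c q < unit_surplus P c (max f x)"
proof (cases "q < max f x")
  case True
  then have "max f x = f" using assms by auto
  with True show ?thesis using unit_surplus_less_floor[OF f(1)] assms by auto
next
  case False
  have "c \<le> V P (max f x) - max f x * P (max f x)"
  proof (cases "f < x")
    case True
    then show ?thesis using consumer_surplus_strict_mono[of f x] f by simp
  qed (use f in simp)
  moreover have "0 < max f x" "max f x < q" using False assms by auto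
  ultimately show ?thesis by (rule unit_surplus_strict_decreasing)
qed

end

definition floor_quantity :: "real \<Rightarrow> real \<Rightarrow> real" where
  "floor_quantity f x = (if x = 0 then 0 else max f x)"

text \<open>The randomization probability x / floor_quantity f x relies on x / 0 = 0 where x = 0.\<close>
definition floor_randomization :: "real \<Rightarrow> real \<Rightarrow> mech \<Rightarrow> mech" where
  "floor_randomization f thi M = (case M of (r, q, u) \<Rightarrow>
     (\<lambda>t. q t * r t / floor_quantity f (q t * r t),
      \<lambda>t. floor_quantity f (q t * r t),
      \<lambda>t. u t - u thi))"

lemma IC_IR_mechanismD:
  assumes "IC_IR tlo thi qbar (r, q, u)" "t \<in> {tlo..thi}"
  shows "0 \<le> r t" "r t \<le> 1" "0 \<le> q t" "q t \<le> qbar" "q t = 0 \<longleftrightarrow> r t = 0"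
  using assms unfolding IC_IR_def is_mechanism_def by auto

lemma floor_quantity_mult_share:
  "0 < f \<Longrightarrow> floor_quantity f x * (x / floor_quantity f x) = x"
  by (simp add: floor_quantity_def max_def)

lemma floor_quantity_cases:
  assumes "0 < f" "0 \<le> r" "r \<le> 1" "q = 0 \<longleftrightarrow> r = 0" "q = floor_quantity f (q * r)"
  shows "f \<le> q * r \<Longrightarrow> f \<le> q \<and> r = 1"
    and "0 < q * r \<Longrightarrow> q * r < f \<Longrightarrow> q = f \<and> 0 < r \<and> r < 1"
    and "q * r = 0 \<Longrightarrow> q = 0 \<and> r = 0"
proof -
  show "f \<le> q * r \<Longrightarrow> f \<le> q \<and> r = 1" and "q * r = 0 \<Longrightarrow> q = 0 \<and> r = 0"
    using assms by (auto simp: floor_quantity_def max_def split: if_splits)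
  assume "0 < q * r" "q * r < f"
  then have "q = f" using assms(5) by (auto simp: floor_quantity_def max_def split: if_splits)
  with \<open>q * r < f\<close> \<open>0 < q * r\<close> assms(1) show "q = f \<and> 0 < r \<and> r < 1"
    by (simp add: zero_less_mult_iff)
qed

lemma IC_imp_antimono:
  assumes "IC tlo thi (r, q, u)"
  shows "antimono_on {tlo..thi} (\<lambda>t. q t * r t)"
proof (rule monotone_onI)
  fix a b assume ab: "a \<in> {tlo..thi}" "b \<in> {tlo..thi}" "a \<le> b"
  have "u b + (b - a) * (q b * r b) \<le> u a" "u a + (a - b) * (q a * r a) \<le> u b"
    using assms ab unfolding IC_def by (auto simp: mult.assoc)
  then have "(b - a) * (q b * r b - q a * r a) \<le> 0" by (simp add: algebra_simps)
  with ab show "q b * r b \<le> q a * r a"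
    by (cases "a = b") (auto simp: mult_le_0_iff)
qed

lemma is_interval_antimono_preimage:
  fixes x :: "real \<Rightarrow> real"
  assumes "antimono_on S x" "is_interval S" "is_interval J"
  shows "is_interval {t \<in> S. x t \<in> J}"
  unfolding is_interval_1
proof (intro ballI allI impI)
  fix a b y assume a: "a \<in> {t \<in> S. x t \<in> J}" and b: "b \<in> {t \<in> S. x t \<in> J}"
    and y: "a \<le> y \<and> y \<le> b"
  then have "y \<in> S" using assms(2) unfolding is_interval_1 by blast
  moreover have "x b \<le> x y" "x y \<le> x a"
    using monotone_onD[OF assms(1)] a b y \<open>y \<in> S\<close> by auto
  ultimately show "y \<in> {t \<in> S. x t \<in> J}"
    using a b assms(3) unfolding is_interval_1 by blast
qed

lemma floor_randomizedI:
  assumes icir: "IC_IR tlo thi qbar (r, q, u)" and "u thi = 0" and f: "0 < qfloor P c"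
    and floor: "\<And>t. t \<in> {tlo..thi} \<Longrightarrow> q t = floor_quantity (qfloor P c) (q t * r t)"
  shows "floor_randomized P c tlo thi qbar (r, q, u)"
proof -
  let ?f = "qfloor P c" and ?x = "\<lambda>t. q t * r t"
  note mech = IC_IR_mechanismD[OF icir]
  note cases = floor_quantity_cases[OF f mech(1,2,5) floor]
  have anti: "antimono_on {tlo..thi} ?x"
    using icir IC_imp_antimono unfolding IC_IR_def by blast
  define T1 where "T1 = {t \<in> {tlo..thi}. ?x t \<in> {?f..}}"
  define T01 where "T01 = {t \<in> {tlo..thi}. ?x t \<in> {0<..<?f}}"
  define T0 where "T0 = {t \<in> {tlo..thi}. ?x t \<in> {..0}}"
  have intervals: "is_interval T1" "is_interval T01" "is_interval T0"
    unfolding T1_def T01_def T0_def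
    by (intro is_interval_antimono_preimage[OF anti] is_interval_cc is_interval_ci
        is_interval_oo is_interval_ic)+
  have less: "t < s" if "s \<in> {tlo..thi}" "t \<in> {tlo..thi}" "?x s < ?x t" for s t
    using monotone_onD[OF anti, of s t] that by force
  have order: "\<forall>a\<in>T0. \<forall>b\<in>T01. b < a" "\<forall>a\<in>T01. \<forall>b\<in>T1. b < a" "\<forall>a\<in>T0. \<forall>b\<in>T1. b < a"
    unfolding T1_def T01_def T0_def using less f by fastforce+
  have nonneg: "0 \<le> ?x t" if "t \<in> {tlo..thi}" for t
    using mech(1,3)[OF that] by simp
  then have cover: "T1 \<union> T01 \<union> T0 = {tlo..thi}"
    unfolding T1_def T01_def T0_def by fastforce
  have disjoint: "T1 \<inter> T01 = {}" "T1 \<inter> T0 = {}" "T01 \<inter> T0 = {}"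
    unfolding T1_def T01_def T0_def using f by auto
  have "\<forall>t\<in>T1. ?f \<le> q t \<and> r t = 1"
    unfolding T1_def using cases(1) by auto
  moreover have "\<forall>t\<in>T01. q t = ?f \<and> 0 < r t \<and> r t < 1"
    unfolding T01_def using cases(2) by auto
  moreover have "\<forall>t\<in>T0. q t = 0 \<and> r t = 0"
    unfolding T0_def using cases(3) nonneg by fastforce
  ultimately show ?thesis
    using assms(1,2) intervals order cover disjoint
    unfolding floor_randomized_def prod.case by blast
qed

lemma IC_IR_floor_randomization:
  assumes icir: "IC_IR tlo thi qbar (r, q, u)" and f: "0 < f" "f \<le> qbar" and "tlo \<le> thi"
  shows "IC_IR tlo thi qbar (floor_randomization f thi (r, q, u))"
proof -
  let ?x = "\<lambda>t. q t * r t"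
  let ?Q = "\<lambda>t. floor_quantity f (?x t)"
  note mech = IC_IR_mechanismD[OF icir]
  have ic: "u t' + (t' - t) * ?x t' \<le> u t" if "t \<in> {tlo..thi}" "t' \<in> {tlo..thi}" for t t'
    using icir that unfolding IC_IR_def IC_def by (simp add: mult.assoc)
  have "is_mechanism tlo thi qbar (floor_randomization f thi (r, q, u))"
    unfolding is_mechanism_def floor_randomization_def prod.case
  proof
    fix t assume t: "t \<in> {tlo..thi}"
    have "0 \<le> ?x t" "?x t \<le> q t" using mech[OF t] by (simp_all add: mult_left_le)
    then show "0 \<le> ?x t / ?Q t \<and> ?x t / ?Q t \<le> 1 \<and> 0 \<le> ?Q t \<and> ?Q t \<le> qbar
        \<and> (?Q t = 0 \<longleftrightarrow> ?x t / ?Q t = 0)"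
      using mech(4)[OF t] f by (auto simp: floor_quantity_def)
  qed
  moreover have "IC tlo thi (floor_randomization f thi (r, q, u))"
    unfolding IC_def floor_randomization_def prod.case
  proof (intro ballI)
    fix t t' assume "t \<in> {tlo..thi}" "t' \<in> {tlo..thi}"
    moreover have "(t' - t) * ?Q t' * (?x t' / ?Q t') = (t' - t) * ?x t'"
      using floor_quantity_mult_share[OF f(1)] by (metis mult.assoc)
    ultimately show "u t' - u thi + (t' - t) * ?Q t' * (?x t' / ?Q t') \<le> u t - u thi"
      using ic by simp
  qed
  moreover have "IR tlo thi (floor_randomization f thi (r, q, u))"
    unfolding IR_def floor_randomization_def prod.case
  proof
    fix t assume t: "t \<in> {tlo..thi}"
    have thi: "thi \<in> {tlo..thi}" using \<open>tlo \<le> thi\<close> by simp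
    have "0 \<le> (thi - t) * ?x thi" using t mech[OF thi] by simp
    with ic[OF t thi] show "0 \<le> u t - u thi" by simp
  qed
  ultimately show ?thesis unfolding IC_IR_def by simp
qed

lemma floor_randomized_floor_randomization:
  assumes "IC_IR tlo thi qbar (r, q, u)" "0 < qfloor P c" "qfloor P c \<le> qbar" "tlo \<le> thi"
  shows "floor_randomized P c tlo thi qbar (floor_randomization (qfloor P c) thi (r, q, u))"
  using IC_IR_floor_randomization[OF assms(1-4)] floor_quantity_mult_share[OF assms(2)]
  unfolding floor_randomization_def prod.case
  by (intro floor_randomizedI[OF _ _ assms(2)]) auto

lemma (in demand) surplus_le_floor_quantity:
  assumes f: "V P f - f * P f = c" "0 < f"
    and mech: "0 \<le> r" "r \<le> 1" "0 \<le> q" "q = 0 \<longleftrightarrow> r = 0"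
  defines "Q \<equiv> floor_quantity f (q * r)"
  shows "r * TS P c \<theta> q \<le> q * r / Q * TS P c \<theta> Q"
    and "r * TS P c \<theta> q = q * r / Q * TS P c \<theta> Q \<Longrightarrow> q = Q"
proof -
  have strict: "r * TS P c \<theta> q < q * r / Q * TS P c \<theta> Q" if "q \<noteq> Q"
  proof -
    have x: "0 < q * r" using that mech unfolding Q_def floor_quantity_def by auto
    then have Q: "Q = max f (q * r)" "0 < Q" using f unfolding Q_def floor_quantity_def by auto
    have "q * r \<le> q" using mech by (simp add: mult_left_le)
    with f x Q that have "unit_surplus P c q < unit_surplus P c Q"
      using unit_surplus_less_max_floor by simp
    with x have "q * r * (unit_surplus P c q - \<theta>) < q * r * (unit_surplus P c Q - \<theta>)"
      by (intro mult_strict_left_mono) simp_all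
    moreover have "q \<noteq> 0" using x by auto
    ultimately show ?thesis using Q(2) by (simp add: TS_eq_unit_surplus mult_ac)
  qed
  have equal: "r * TS P c \<theta> q = q * r / Q * TS P c \<theta> Q" if "q = Q"
    using that mech by (cases "q = 0") (auto simp: TS_def)
  show "r * TS P c \<theta> q \<le> q * r / Q * TS P c \<theta> Q"
    using strict equal by (metis order_le_less)
  show "r * TS P c \<theta> q = q * r / Q * TS P c \<theta> Q \<Longrightarrow> q = Q"
    using strict by (metis less_irrefl)
qed

lemma (in demand) floor_randomization_dominates:
  assumes icir: "IC_IR tlo thi qbar (r, q, u)"
    and not_fr: "\<not> floor_randomized P c tlo thi qbar (r, q, u)"
    and f: "V P (qfloor P c) - qfloor P c * P (qfloor P c) = c" "0 < qfloor P c"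
      "qfloor P c \<le> qbar"
    and "tlo \<le> thi" "\<alpha> < 1"
  shows "dominates P c \<alpha> tlo thi qbar (floor_randomization (qfloor P c) thi (r, q, u)) (r, q, u)"
proof -
  let ?M' = "floor_randomization (qfloor P c) thi (r, q, u)"
  let ?Q = "\<lambda>t. floor_quantity (qfloor P c) (q t * r t)"
  let ?gain = "\<lambda>t. q t * r t / ?Q t * TS P c t (?Q t) - r t * TS P c t (q t)"
  note mech = IC_IR_mechanismD[OF icir]
  have surplus: "r t * TS P c t (q t) \<le> q t * r t / ?Q t * TS P c t (?Q t)"
    "r t * TS P c t (q t) = q t * r t / ?Q t * TS P c t (?Q t) \<Longrightarrow> q t = ?Q t"
    if "t \<in> {tlo..thi}" for t
    using surplus_le_floor_quantity[OF f(1,2) mech(1-3,5)[OF that]] by blast+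
  have RS_diff: "RS P c \<alpha> t ?M' - RS P c \<alpha> t (r, q, u) = ?gain t + (1 - \<alpha>) * u thi" for t
    unfolding RS_def floor_randomization_def prod.case by (simp add: algebra_simps)
  have gain_nonneg: "0 \<le> ?gain t" if "t \<in> {tlo..thi}" for t
    using surplus(1)[OF that] by simp
  have thi: "thi \<in> {tlo..thi}" using \<open>tlo \<le> thi\<close> by simp
  then have u_nonneg: "0 \<le> (1 - \<alpha>) * u thi"
    using icir \<open>\<alpha> < 1\<close> unfolding IC_IR_def IR_def by simp
  have weak: "\<forall>t\<in>{tlo..thi}. RS P c \<alpha> t (r, q, u) \<le> RS P c \<alpha> t ?M'"
  proof
    fix t assume "t \<in> {tlo..thi}"
    with RS_diff[of t] gain_nonneg u_nonneg
    show "RS P c \<alpha> t (r, q, u) \<le> RS P c \<alpha> t ?M'" by fastforce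
  qed
  have "\<exists>t\<in>{tlo..thi}. RS P c \<alpha> t (r, q, u) < RS P c \<alpha> t ?M'"
  proof (rule ccontr)
    assume no_strict: "\<not> ?thesis"
    have no_gain: "?gain t = 0" "(1 - \<alpha>) * u thi = 0" if t: "t \<in> {tlo..thi}" for t
    proof -
      have "\<not> RS P c \<alpha> t (r, q, u) < RS P c \<alpha> t ?M'" using no_strict t by blast
      then show "?gain t = 0" "(1 - \<alpha>) * u thi = 0"
        using RS_diff[of t] gain_nonneg[OF t] u_nonneg by linarith+
    qed
    have "q t = ?Q t" if t: "t \<in> {tlo..thi}" for t
      using surplus(2)[OF t] no_gain(1)[OF t] by simp
    moreover have "u thi = 0" using no_gain(2)[OF thi] \<open>\<alpha> < 1\<close> by simp
    ultimately have "floor_randomized P c tlo thi qbar (r, q, u)"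
      by (intro floor_randomizedI[OF icir _ f(2)])
    with not_fr show False ..
  qed
  with weak icir IC_IR_floor_randomization[OF icir f(2,3) \<open>tlo \<le> thi\<close>] show ?thesis
    unfolding dominates_def by blast
qed

theorem theorem1:
  fixes tlo thi c qbar \<alpha> :: real and P :: "real \<Rightarrow> real" and M :: mech
  assumes "0 < tlo" and "tlo < thi"
    and "c > 0"
    and "continuous_on {0..} P"
    and "\<forall>x y. 0 \<le> x \<longrightarrow> x < y \<longrightarrow> P y < P x"
    and "qbar > 0" and "P qbar = 0"
    and A2: "\<exists>q\<ge>0. P q = thi \<and> TS P c thi q > 0"
    and "0 \<le> \<alpha>" and "\<alpha> < 1"
    and "IC_IR tlo thi qbar M"
    and "\<not> floor_randomized P c tlo thi qbar M"
  shows "\<exists>M'. floor_randomized P c tlo thi qbar M' \<and> dominates P c \<alpha> tlo thi qbar M' M"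
proof -
  interpret demand P using assms(4,5) by unfold_locales blast+
  obtain r q u where M: "M = (r, q, u)" by (cases M)
  obtain q0 where q0: "0 \<le> q0" "P q0 = thi" "TS P c thi q0 > 0" using A2 by blast
  then have "q0 \<noteq> 0" by (auto simp: TS_def)
  with q0 have "c < V P q0 - q0 * P q0" by (simp add: TS_def mult.commute)
  note floor = qfloor_exists[OF \<open>c > 0\<close> q0(1) this]
  have "q0 < qbar" using P_less_imp_less[of qbar q0] q0(2) assms(1,2,6,7) by simp
  with floor have "qfloor P c \<le> qbar" by simp
  with floor assms show ?thesis unfolding M
    by (intro exI[of _ "floor_randomization (qfloor P c) thi (r, q, u)"] conjI
        floor_randomized_floor_randomization floor_randomization_dominates) auto
qed

end
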